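(* Let $d\geq 1$ and $n>d$ be integers, and let $\mathcal C(n,d)=\operatorname{conv}\{\mu_d(1),\dots,\mu_d(n)\}$ be the cyclic polytope, where $\mu_d(t)=(t,t^2,\dots,t^d)$. Let $\Delta$ and $\Delta'$ be two triangulations of (the vertex set of) $\mathcal C(n,d)$ which differ by a flip $[\Delta\rightsquigarrow\Delta']$. Then \[ \Delta\leq_1\Delta' \iff \begin{cases} \mathrm{gkz}_\Delta>_{\mathrm{lex}}\mathrm{gkz}_{\Delta'} & \text{if } d \text{ is even},\\ \mathrm{gkz}_\Delta<_{\mathrm{lex}}\mathrm{gkz}_{\Delta'} & \text{if } d \text{ is odd}.\end{cases} \]
   Context: A triangulation of a finite point configuration $P\subset\mathbb R^d$ is a subdivision of $\operatorname{conv}(P)$ into $d$-simplices whose vertices are points of $P$. A circuit is a minimally affinely dependent subset of $P$; for the vertex set of $\mathcal C(n,d)$ every circuit consists of $d+2$ vertices $\mu_d(t_1),\dots,\mu_d(t_{d+2})$ ($t_1<\dots<t_{d+2}$) and is combinatorially a cyclic polytope $\mathcal C(d+2,d)$, which has exactly two triangulations. These are obtained by projecting (forgetting the last coordinate) the lower facets, resp. the upper facets, of the $(d+1)$-simplex $\operatorname{conv}\{\mu_{d+1}(t_1),\dots,\mu_{d+1}(t_{d+2})\}$; they are called the lower and the upper triangulation of the circuit. Two triangulations $\Delta,\Delta'$ differ by a flip if they agree outside some circuit $C$ and, restricted to $C$, one of them is the lower and the other the upper triangulation of $C$. The flip $[\Delta\rightsquigarrow\Delta']$ is an up-flip if $\Delta$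 restricts to the lower and $\Delta'$ to the upper triangulation of $C$; then one writes $\Delta\leq_1\Delta'$. (The first higher Stasheff–Tamari order $\mathrm{HST}_1(n,d)$ is the reflexive–transitive closure of this relation.) For a triangulation $\Delta$ of the vertex set $\{\mu_d(1),\dots,\mu_d(n)\}$, its GKZ-vector is $\mathrm{gkz}_\Delta=(\mathrm{gkz}_\Delta(\mu_d(1)),\dots,\mathrm{gkz}_\Delta(\mu_d(n)))\in\mathbb R^n$ (vertices in the natural order along the moment curve), where $\mathrm{gkz}_\Delta(p)$ is the sum of the normalized volumes ($d!$ times Euclidean volume) of the simplices of $\Delta$ having $p$ as a vertex. $>_{\mathrm{lex}}$, $<_{\mathrm{lex}}$ denote the lexicographic order on $\mathbb R^n$. *)

theory Defs
  imports "HOL-Analysis.Analysis"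
begin

text \<open>Points of R^d are modelled as vectors of type real^'d, d = CARD('d::{finite,wellorder}).
  The coordinates are ordered by the well-order on 'd; the k-th coordinate
  (k = 1..d) of the moment curve is t^k.\<close>

definition coord_index :: "'d::{finite,wellorder} \<Rightarrow> nat" where
  "coord_index i = Suc (card {j. j < i})"

definition moment :: "real \<Rightarrow> real ^ ('d::{finite,wellorder})" where
  "moment t = (\<chi> i. t ^ coord_index i)"

definition cvert :: "nat \<Rightarrow> real ^ ('d::{finite,wellorder})" where
  "cvert i = moment (real i)"

text \<open>Simplices are represented by their vertex index sets (subsets of {1..n}).\<close>
definition is_dsimplex :: "nat \<Rightarrow> nat set \<Rightarrow> 'd::{finite,wellorder} itself \<Rightarrow> bool" where
  "is_dsimplex n S _ \<longleftrightarrow> S \<subseteq> {1..n} \<and> card S = CARD('d::{finite,wellorder}) + 1 \<and>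
      \<not> affine_dependent ((cvert :: nat \<Rightarrow> real ^ ('d::{finite,wellorder})) ` S)"

definition triangulation :: "nat \<Rightarrow> nat set set \<Rightarrow> 'd::{finite,wellorder} itself \<Rightarrow> bool" where
  "triangulation n T D \<longleftrightarrow> finite T \<and>
     (\<forall>S\<in>T. is_dsimplex n S D) \<and>
     (\<Union>S\<in>T. convex hull ((cvert :: nat \<Rightarrow> real ^ ('d::{finite,wellorder})) ` S))
        = convex hull ((cvert :: nat \<Rightarrow> real ^ ('d::{finite,wellorder})) ` {1..n}) \<and>
     (\<forall>S\<in>T. \<forall>S'\<in>T.
        convex hull ((cvert :: nat \<Rightarrow> real ^ ('d::{finite,wellorder})) ` S) \<inter> convex hull (cvert ` S')
          = convex hull (cvert ` (S \<inter> S')))"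

definition circuit :: "nat \<Rightarrow> nat set \<Rightarrow> 'd::{finite,wellorder} itself \<Rightarrow> bool" where
  "circuit n C _ \<longleftrightarrow> C \<subseteq> {1..n} \<and> affine_dependent ((cvert :: nat \<Rightarrow> real ^ ('d::{finite,wellorder})) ` C) \<and>
     (\<forall>C'. C' \<subset> C \<longrightarrow> \<not> affine_dependent ((cvert :: nat \<Rightarrow> real ^ ('d::{finite,wellorder})) ` C'))"

text \<open>Lower / upper facets of the lifted simplex conv{mu_(d+1)(t) : t in C}:
  a facet F (d+1 of the points of C) is lower iff the non-vertical hyperplane
  through its lifted points, i.e. the graph of an affine function
  x \<mapsto> a \<bullet> x + b, has the remaining lifted point strictly above it
  (last coordinate t^(d+1)); upper iff strictly below.  Projecting
  (forgetting the last coordinate) gives the lower/upper triangulation.\<close>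
definition lower_triang :: "nat set \<Rightarrow> 'd::{finite,wellorder} itself \<Rightarrow> nat set set" where
  "lower_triang C _ = {F. F \<subseteq> C \<and> card F = CARD('d::{finite,wellorder}) + 1 \<and>
     (\<exists>(a :: real ^ ('d::{finite,wellorder})) b.
        (\<forall>i\<in>F. a \<bullet> cvert i + b = real i ^ (CARD('d::{finite,wellorder}) + 1)) \<and>
        (\<forall>j\<in>C - F. a \<bullet> cvert j + b < real j ^ (CARD('d::{finite,wellorder}) + 1)))}"

definition upper_triang :: "nat set \<Rightarrow> 'd::{finite,wellorder} itself \<Rightarrow> nat set set" where
  "upper_triang C _ = {F. F \<subseteq> C \<and> card F = CARD('d::{finite,wellorder}) + 1 \<and>
     (\<exists>(a :: real ^ ('d::{finite,wellorder})) b.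
        (\<forall>i\<in>F. a \<bullet> cvert i + b = real i ^ (CARD('d::{finite,wellorder}) + 1)) \<and>
        (\<forall>j\<in>C - F. a \<bullet> cvert j + b > real j ^ (CARD('d::{finite,wellorder}) + 1)))}"

definition restrict_to :: "nat set set \<Rightarrow> nat set \<Rightarrow> nat set set" where
  "restrict_to T C = {S\<in>T. S \<subseteq> C}"

definition outside :: "nat set set \<Rightarrow> nat set \<Rightarrow> nat set set" where
  "outside T C = {S\<in>T. \<not> S \<subseteq> C}"

definition up_flip :: "nat \<Rightarrow> nat set set \<Rightarrow> nat set set \<Rightarrow> 'd::{finite,wellorder} itself \<Rightarrow> bool" where
  "up_flip n T T' D \<longleftrightarrow> (\<exists>C. circuit n C D \<and> outside T C = outside T' C \<and>
      restrict_to T C = lower_triang C D \<and> restrict_to T' C = upper_triang C D)"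

definition differ_by_flip :: "nat \<Rightarrow> nat set set \<Rightarrow> nat set set \<Rightarrow> 'd::{finite,wellorder} itself \<Rightarrow> bool" where
  "differ_by_flip n T T' D \<longleftrightarrow> up_flip n T T' D \<or> up_flip n T' T D"

definition gkz_entry :: "nat set set \<Rightarrow> nat \<Rightarrow> 'd::{finite,wellorder} itself \<Rightarrow> real" where
  "gkz_entry T i _ = (\<Sum>S\<in>{S\<in>T. i \<in> S}.
      fact CARD('d::{finite,wellorder}) * measure lebesgue (convex hull ((cvert :: nat \<Rightarrow> real ^ ('d::{finite,wellorder})) ` S)))"

definition gkz :: "nat \<Rightarrow> nat set set \<Rightarrow> 'd::{finite,wellorder} itself \<Rightarrow> real list" where
  "gkz n T D = map (\<lambda>i. gkz_entry T i D) [1..<n+1]"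

definition lex_less :: "real list \<Rightarrow> real list \<Rightarrow> bool" where
  "lex_less xs ys \<longleftrightarrow> lexordp (<) xs ys"

end

(*
  Affine functions restricted to the moment curve are exactly the polynomials of degree at most d.
  Hence, for a circuit C with least element t and F = C - {t}, the hyperplane through the lifted
  points of F misses the lifted point of t by the product of (t - f) over f in F, whose sign is
  (-1)^(d+1): F is a lower facet of the lifted circuit iff d is odd, an upper one iff d is even.
  Every other simplex of either triangulation of C contains t, and the two triangulations of C
  cover the same volume, because the rest of the two triangulations of the polytope is shared.
  So the GKZ vectors agree before position t, and at position t the side containing F is smaller
  by the normalized volume of F.
*)

theory Submission
  imports Defs "HOL-Computational_Algebra.Polynomial"
begin

type_synonym 'd point = "(real, 'd) vec"

section \<open>Affine functions along the moment curve\<close>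

lemma strict_mono_coord_index: "strict_mono (coord_index :: 'd::{finite,wellorder} \<Rightarrow> nat)"
  unfolding strict_mono_def coord_index_def
  by (auto intro!: psubset_card_mono)

lemma bij_betw_coord_index:
  "bij_betw (coord_index :: 'd::{finite,wellorder} \<Rightarrow> nat) UNIV {1..CARD('d)}"
proof -
  have inj: "inj (coord_index :: 'd \<Rightarrow> nat)"
    by (rule strict_mono_imp_inj_on[OF strict_mono_coord_index])
  have "coord_index i \<in> {1..CARD('d)}" for i :: 'd
  proof -
    have "{j. j < i} \<subset> UNIV" by auto
    then show ?thesis by (auto simp: coord_index_def Suc_le_eq intro: psubset_card_mono)
  qed
  then have "coord_index ` (UNIV :: 'd set) \<subseteq> {1..CARD('d)}" by blast
  moreover have "card (coord_index ` (UNIV :: 'd set)) = card {1..CARD('d)}"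
    using card_image[OF inj] by simp
  ultimately show ?thesis
    using inj by (simp add: bij_betw_def card_subset_eq)
qed

lemma affine_moment_eq_poly:
  fixes a :: "'d::{finite,wellorder} point"
  obtains p where "degree p \<le> CARD('d)" "\<And>t. a \<bullet> moment t + b = poly p t"
proof
  let ?p = "[:b:] + (\<Sum>i\<in>UNIV. monom (a $ i) (coord_index i))"
  have "coord_index i \<le> CARD('d)" for i :: 'd
    using bij_betw_apply[OF bij_betw_coord_index] by fastforce
  then show "degree ?p \<le> CARD('d)"
    by (intro degree_add_le degree_sum_le) (auto intro: order.trans[OF degree_monom_le])
  show "a \<bullet> moment t + b = poly ?p t" for t
    by (simp add: poly_sum poly_monom inner_vec_def moment_def mult.commute)
qed

lemma poly_eq_affine_moment:
  fixes p :: "real poly"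
  assumes "degree p \<le> CARD('d::{finite,wellorder})"
  obtains a :: "'d::{finite,wellorder} point" and b where "\<And>t. a \<bullet> moment t + b = poly p t"
proof
  let ?a = "(\<chi> i. coeff p (coord_index i)) :: 'd point"
  fix t
  have "?a \<bullet> moment t = (\<Sum>i\<in>(UNIV :: 'd set). coeff p (coord_index i) * t ^ coord_index i)"
    by (simp add: inner_vec_def moment_def)
  also have "\<dots> = (\<Sum>k\<in>{1..CARD('d)}. coeff p k * t ^ k)"
    by (rule sum.reindex_bij_betw[OF bij_betw_coord_index])
  finally have "?a \<bullet> moment t + coeff p 0 = (\<Sum>k\<le>CARD('d). coeff p k * t ^ k)"
    by (simp add: atMost_atLeast0 sum.atLeast_Suc_atMost)
  also have "\<dots> = poly p t"
    using assms by (simp add: poly_altdef) (intro sum.mono_neutral_right; auto simp: coeff_eq_0)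
  finally show "?a \<bullet> moment t + coeff p 0 = poly p t" .
qed

definition vanishing_poly :: "'a::comm_ring_1 set \<Rightarrow> 'a poly" where
  "vanishing_poly F = (\<Prod>f\<in>F. [:- f, 1:])"

lemma poly_vanishing_poly: "poly (vanishing_poly F) t = (\<Prod>f\<in>F. t - f)"
  by (simp add: vanishing_poly_def poly_prod)

lemma degree_vanishing_poly:
  "finite F \<Longrightarrow> degree (vanishing_poly (F :: 'a::idom set)) = card F"
  by (simp add: vanishing_poly_def degree_prod_eq_sum_degree)

lemma lead_coeff_vanishing_poly: "lead_coeff (vanishing_poly (F :: 'a::idom set)) = 1"
  by (simp add: vanishing_poly_def lead_coeff_prod)

lemma degree_power_minus_vanishing_poly:
  assumes "card F = Suc m"
  shows "degree (monom 1 (Suc m) - vanishing_poly (F :: 'a::idom set)) \<le> m"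
proof (rule degree_le, intro allI impI)
  fix k assume "m < k"
  have "finite F"
    using assms by (simp add: card_ge_0_finite)
  with assms \<open>m < k\<close> lead_coeff_vanishing_poly[of F] degree_vanishing_poly[of F]
  show "coeff (monom 1 (Suc m) - vanishing_poly F) k = 0"
    by (cases "k = Suc m") (auto simp: coeff_monom coeff_eq_0)
qed

lemma power_interpolant_eq:
  fixes p :: "'a::idom poly"
  assumes "card F = Suc m" "degree p \<le> m" "\<And>f. f \<in> F \<Longrightarrow> poly p f = f ^ Suc m"
  shows "p = monom 1 (Suc m) - vanishing_poly F"
proof (rule poly_eqI_degree[where A = F])
  have "finite F"
    using assms(1) by (simp add: card_ge_0_finite)
  then show "poly p f = poly (monom 1 (Suc m) - vanishing_poly F) f" if "f \<in> F" for f
    using that assms(3) by (auto simp: poly_monom poly_vanishing_poly)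
qed (use assms(1,2) degree_power_minus_vanishing_poly[OF assms(1)] in auto)

lemma moment_lifting_gap:
  fixes a :: "'d::{finite,wellorder} point"
  assumes "card F = CARD('d) + 1"
    and "\<And>f. f \<in> F \<Longrightarrow> a \<bullet> moment f + b = f ^ (CARD('d) + 1)"
  shows "t ^ (CARD('d) + 1) - (a \<bullet> moment t + b) = (\<Prod>f\<in>F. t - f)"
proof -
  obtain p where deg: "degree p \<le> CARD('d)" and p: "\<And>t. a \<bullet> moment t + b = poly p t"
    using affine_moment_eq_poly by blast
  have "poly p f = f ^ Suc CARD('d)" if "f \<in> F" for f
    using assms(2)[OF that] by (simp add: p[symmetric])
  with assms(1) deg have "p = monom 1 (Suc CARD('d)) - vanishing_poly F"
    by (intro power_interpolant_eq) simp_all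
  then show ?thesis
    by (simp add: p poly_monom poly_vanishing_poly)
qed

lemma moment_lifting_exists:
  assumes "card F = CARD('d::{finite,wellorder}) + 1"
  obtains a :: "'d::{finite,wellorder} point" and b
    where "\<And>t. t ^ (CARD('d) + 1) - (a \<bullet> moment t + b) = (\<Prod>f\<in>F. t - f)"
proof -
  have "degree (monom 1 (Suc CARD('d)) - vanishing_poly F) \<le> CARD('d)"
    using assms by (intro degree_power_minus_vanishing_poly) simp
  then obtain a :: "'d point" and b
    where ab: "\<And>t. a \<bullet> moment t + b = poly (monom 1 (Suc CARD('d)) - vanishing_poly F) t"
    using poly_eq_affine_moment by blast
  have "t ^ (CARD('d) + 1) - (a \<bullet> moment t + b) = (\<Prod>f\<in>F. t - f)" for t
    by (simp add: ab poly_monom poly_vanishing_poly)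
  then show ?thesis
    by (rule that)
qed

lemma inj_moment: "inj (moment :: real \<Rightarrow> 'd::{finite,wellorder} point)"
proof -
  have "degree [:0, 1 :: real:] \<le> CARD('d)"
    by simp
  then obtain a :: "'d point" and b where ab: "\<And>t. a \<bullet> moment t + b = poly [:0, 1:] t"
    using poly_eq_affine_moment by blast
  show ?thesis
  proof (rule injI)
    fix s t :: real
    assume "moment s = (moment t :: 'd point)"
    then have "a \<bullet> moment s + b = a \<bullet> moment t + b"
      by simp
    then show "s = t"
      by (simp add: ab)
  qed
qed

lemma affine_independent_moment:
  assumes "finite S" "card S \<le> CARD('d::{finite,wellorder}) + 1"
  shows "\<not> affine_dependent (moment ` S :: 'd point set)"
proof
  assume "affine_dependent (moment ` S :: 'd point set)"
  then obtain s where "s \<in> S" and s: "moment s \<in> affine hull (moment ` (S - {s}) :: 'd point set)"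
    by (auto simp: affine_dependent_def image_set_diff[OF inj_moment])
  have "degree (vanishing_poly (S - {s})) \<le> CARD('d)"
    using assms \<open>s \<in> S\<close> by (simp add: degree_vanishing_poly)
  then obtain a :: "'d point" and b
    where ab: "\<And>t. a \<bullet> moment t + b = (\<Prod>f\<in>S - {s}. t - f)"
    by (metis poly_eq_affine_moment poly_vanishing_poly)
  have "a \<bullet> x = - b" if x: "x \<in> moment ` (S - {s})" for x
  proof -
    obtain f where "f \<in> S - {s}" "x = moment f"
      using x by blast
    with assms(1) have "a \<bullet> x + b = 0"
      by (simp add: ab)
    then show ?thesis
      by (simp add: eq_neg_iff_add_eq_0)
  qed
  then have "affine hull (moment ` (S - {s})) \<subseteq> {x. a \<bullet> x = - b}"
    by (intro hull_minimal affine_hyperplane) auto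
  with s have "a \<bullet> moment s + b = 0"
    by (auto simp: eq_neg_iff_add_eq_0)
  with assms(1) show False
    by (simp add: ab)
qed

section \<open>Circuits and the facets of their lifts\<close>

lemma inj_cvert: "inj (cvert :: nat \<Rightarrow> 'd::{finite,wellorder} point)"
  by (auto intro!: injI simp: cvert_def inj_eq[OF inj_moment])

lemma affine_independent_cvert:
  assumes "finite S" "card S \<le> CARD('d::{finite,wellorder}) + 1"
  shows "\<not> affine_dependent (cvert ` S :: 'd point set)"
proof -
  have "card (real ` S) \<le> CARD('d) + 1"
    using assms card_image_le order.trans by blast
  then show ?thesis
    using affine_independent_moment[of "real ` S"] assms(1) by (simp add: cvert_def image_image)
qed

lemma card_circuit:
  assumes "circuit n C TYPE('d::{finite,wellorder})"
  shows "finite C" and "card C = CARD('d) + 2"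
proof -
  have C: "C \<subseteq> {1..n}" "affine_dependent (cvert ` C :: 'd point set)"
    "\<And>C'. C' \<subset> C \<Longrightarrow> \<not> affine_dependent (cvert ` C' :: 'd point set)"
    using assms unfolding circuit_def by auto
  then show "finite C"
    using finite_subset by blast
  have "CARD('d) + 2 \<le> card C"
    using affine_independent_cvert[OF \<open>finite C\<close>, where 'd = 'd] C(2) by fastforce
  moreover have "\<not> CARD('d) + 2 < card C"
  proof
    assume "CARD('d) + 2 < card C"
    then obtain C' where "C' \<subset> C" "card C' = CARD('d) + 2"
      by (metis obtain_subset_with_card_n less_imp_le psubsetI less_irrefl)
    moreover have "finite C'"
      using \<open>C' \<subset> C\<close> \<open>finite C\<close> finite_subset by blast
    ultimately have "affine_dependent (cvert ` C' :: 'd point set)"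
      by (intro affine_dependent_biggerset) (simp_all add: card_image inj_on_subset[OF inj_cvert])
    with C(3) \<open>C' \<subset> C\<close> show False
      by blast
  qed
  ultimately show "card C = CARD('d) + 2"
    by simp
qed

lemma cvert_lifting_gap:
  fixes a :: "'d::{finite,wellorder} point"
  assumes "card F = CARD('d) + 1"
    and "\<And>i. i \<in> F \<Longrightarrow> a \<bullet> cvert i + b = real i ^ (CARD('d) + 1)"
  shows "real j ^ (CARD('d) + 1) - (a \<bullet> cvert j + b) = (\<Prod>i\<in>F. real j - real i)"
proof -
  have "card (real ` F) = CARD('d) + 1"
    using assms(1) by (simp add: card_image)
  then have "real j ^ (CARD('d) + 1) - (a \<bullet> moment (real j) + b) = (\<Prod>f\<in>real ` F. real j - f)"
    by (rule moment_lifting_gap) (use assms(2) in \<open>auto simp: cvert_def\<close>)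
  then show ?thesis
    by (simp add: cvert_def prod.reindex)
qed

lemma cvert_lifting_exists:
  assumes "card F = CARD('d::{finite,wellorder}) + 1"
  obtains a :: "'d::{finite,wellorder} point" and b
    where "\<And>i. i \<in> F \<Longrightarrow> a \<bullet> cvert i + b = real i ^ (CARD('d) + 1)"
      and "\<And>j. real j ^ (CARD('d) + 1) - (a \<bullet> cvert j + b) = (\<Prod>i\<in>F. real j - real i)"
proof -
  have "finite F" "card (real ` F) = CARD('d) + 1"
    using assms by (simp_all add: card_ge_0_finite card_image)
  then obtain a :: "'d point" and b
    where ab: "\<And>t. t ^ (CARD('d) + 1) - (a \<bullet> moment t + b) = (\<Prod>f\<in>real ` F. t - f)"
    using moment_lifting_exists by blast
  have gap: "real j ^ (CARD('d) + 1) - (a \<bullet> cvert j + b) = (\<Prod>i\<in>F. real j - real i)" for j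
    using ab[of "real j"] by (simp add: cvert_def prod.reindex)
  have zero: "(\<Prod>i'\<in>F. real i - real i') = 0" if "i \<in> F" for i
    using \<open>finite F\<close> that by (intro prod_zero) auto
  have lifts: "a \<bullet> cvert i + b = real i ^ (CARD('d) + 1)" if "i \<in> F" for i
    using gap[of i] zero[OF that] by linarith
  show ?thesis
    by (rule that[OF lifts gap])
qed

lemma lower_upper_triang_facet_iff:
  assumes "F \<subseteq> C" "card F = CARD('d::{finite,wellorder}) + 1" "C - F = {j}"
  shows "F \<in> lower_triang C TYPE('d) \<longleftrightarrow> 0 < (\<Prod>i\<in>F. real j - real i)"
    and "F \<in> upper_triang C TYPE('d) \<longleftrightarrow> (\<Prod>i\<in>F. real j - real i) < 0"
proof -
  let ?P = "\<Prod>i\<in>F. real j - real i" and ?h = "\<lambda>i. real i ^ (CARD('d) + 1)"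
  obtain a0 :: "'d point" and b0
    where lifts: "\<And>i. i \<in> F \<Longrightarrow> a0 \<bullet> cvert i + b0 = ?h i"
    and ab0: "\<And>j. ?h j - (a0 \<bullet> cvert j + b0) = (\<Prod>i\<in>F. real j - real i)"
    using cvert_lifting_exists[OF assms(2)] by blast
  have gap: "?h j - (a \<bullet> cvert j + b) = ?P"
    if "\<forall>i\<in>F. a \<bullet> cvert i + b = ?h i" for a :: "'d point" and b
    using cvert_lifting_gap[OF assms(2)] that by blast
  show "F \<in> lower_triang C TYPE('d) \<longleftrightarrow> 0 < ?P"
  proof
    assume "F \<in> lower_triang C TYPE('d)"
    then obtain a :: "'d point" and b
      where "\<forall>i\<in>F. a \<bullet> cvert i + b = ?h i"
        and "\<forall>j'\<in>C - F. a \<bullet> cvert j' + b < ?h j'"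
      unfolding lower_triang_def by blast
    then show "0 < ?P"
      using gap assms(3) by fastforce
  next
    assume "0 < ?P"
    then have "\<forall>j'\<in>C - F. a0 \<bullet> cvert j' + b0 < ?h j'"
      using assms(3) ab0[of j] by simp
    with assms(1,2) lifts show "F \<in> lower_triang C TYPE('d)"
      unfolding lower_triang_def by blast
  qed
  show "F \<in> upper_triang C TYPE('d) \<longleftrightarrow> ?P < 0"
  proof
    assume "F \<in> upper_triang C TYPE('d)"
    then obtain a :: "'d point" and b
      where "\<forall>i\<in>F. a \<bullet> cvert i + b = ?h i"
        and "\<forall>j'\<in>C - F. ?h j' < a \<bullet> cvert j' + b"
      unfolding upper_triang_def by blast
    then show "?P < 0"
      using gap assms(3) by fastforce
  next
    assume "?P < 0"
    then have "\<forall>j'\<in>C - F. ?h j' < a0 \<bullet> cvert j' + b0"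
      using assms(3) ab0[of j] by simp
    with assms(1,2) lifts show "F \<in> upper_triang C TYPE('d)"
      unfolding upper_triang_def by blast
  qed
qed

lemma circuit_facet_without_Min:
  assumes "finite C" "card C = CARD('d::{finite,wellorder}) + 2"
  shows "C - {Min C} \<in> lower_triang C TYPE('d) \<longleftrightarrow> odd CARD('d)"
    and "C - {Min C} \<in> upper_triang C TYPE('d) \<longleftrightarrow> even CARD('d)"
proof -
  let ?t = "Min C" and ?F = "C - {Min C}"
  have "?t \<in> C"
    using assms by (intro Min_in) auto
  then have card_F: "card ?F = CARD('d) + 1"
    using assms by simp
  have "(\<Prod>i\<in>?F. real ?t - real i) = (\<Prod>i\<in>?F. - (real i - real ?t))"
    by simp
  also have "\<dots> = (-1) ^ (CARD('d) + 1) * (\<Prod>i\<in>?F. real i - real ?t)"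
    by (simp only: prod_uminus card_F)
  finally have sign:
    "(\<Prod>i\<in>?F. real ?t - real i) = (-1) ^ (CARD('d) + 1) * (\<Prod>i\<in>?F. real i - real ?t)" .
  have "0 < (\<Prod>i\<in>?F. real i - real ?t)"
    using assms(1) by (intro prod_pos) (auto simp: order.strict_iff_order)
  with sign have "0 < (\<Prod>i\<in>?F. real ?t - real i) \<longleftrightarrow> odd CARD('d)"
    and "(\<Prod>i\<in>?F. real ?t - real i) < 0 \<longleftrightarrow> even CARD('d)"
    by (simp_all add: zero_less_mult_iff mult_less_0_iff minus_one_power_iff)
  moreover have "C - ?F = {?t}"
    using \<open>?t \<in> C\<close> by auto
  note facet = lower_upper_triang_facet_iff[OF Diff_subset card_F this]
  ultimately show "?F \<in> lower_triang C TYPE('d) \<longleftrightarrow> odd CARD('d)"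
    and "?F \<in> upper_triang C TYPE('d) \<longleftrightarrow> even CARD('d)"
    using facet by simp_all
qed

section \<open>Volumes of simplices\<close>

lemma measure_convex_hull_pos:
  fixes X :: "'a::euclidean_space set"
  assumes "\<not> affine_dependent X" "card X = DIM('a) + 1"
  shows "0 < measure lebesgue (convex hull X)"
proof -
  have "finite X"
    using assms(2) by (simp add: card_ge_0_finite)
  then have "convex hull X \<in> lmeasurable"
    by (intro lmeasurable_compact compact_convex_hull finite_imp_compact)
  moreover have "interior (convex hull X) \<noteq> {}"
    using assms interior_convex_hull_eq_empty[of X] by simp
  then have "\<not> negligible (convex hull X)"
    by (simp add: negligible_convex_interior)
  ultimately have "measure lebesgue (convex hull X) \<noteq> 0"
    using negligible_iff_measure0 by blast
  then show ?thesis
    using measure_nonneg[of lebesgue "convex hull X"] by linarith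
qed

lemma negligible_convex_hull_card_le:
  fixes X :: "'a::euclidean_space set"
  assumes "finite X" "card X \<le> DIM('a)"
  shows "negligible (convex hull X)"
  using empty_interior_convex_hull[OF assms] negligible_convex_interior[OF convex_convex_hull] by blast

definition normalized_volume :: "nat set \<Rightarrow> 'd::{finite,wellorder} itself \<Rightarrow> real" where
  "normalized_volume S _ = fact CARD('d) * measure lebesgue (convex hull (cvert ` S :: 'd point set))"

lemma gkz_entry_eq_sum_normalized_volume:
  "gkz_entry T i D = (\<Sum>S\<in>{S\<in>T. i \<in> S}. normalized_volume S D)"
  by (simp add: gkz_entry_def normalized_volume_def)

lemma normalized_volume_pos:
  assumes "finite S" "card S = CARD('d::{finite,wellorder}) + 1"
  shows "0 < normalized_volume S TYPE('d)"
proof -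
  have "\<not> affine_dependent (cvert ` S :: 'd point set)"
    using assms by (simp add: affine_independent_cvert)
  moreover have "card (cvert ` S :: 'd point set) = DIM('d point) + 1"
    using assms by (simp add: card_image inj_on_subset[OF inj_cvert])
  ultimately show ?thesis
    unfolding normalized_volume_def by (simp add: measure_convex_hull_pos)
qed

lemma negligible_inter_triangulation_simplices:
  assumes "triangulation n T TYPE('d::{finite,wellorder})" "S \<in> T" "S' \<in> T" "S \<noteq> S'"
  shows "negligible (convex hull (cvert ` S) \<inter> convex hull (cvert ` S') :: 'd point set)"
proof -
  have sub: "S \<subseteq> {1..n}" "S' \<subseteq> {1..n}"
    and card: "card S = CARD('d) + 1" "card S' = CARD('d) + 1"
    and inter: "convex hull (cvert ` S) \<inter> convex hull (cvert ` S')
      = (convex hull (cvert ` (S \<inter> S')) :: 'd point set)"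
    using assms unfolding triangulation_def is_dsimplex_def by auto
  then have "finite S" "finite S'"
    by (auto intro: finite_subset)
  have "\<not> S \<subseteq> S'"
  proof
    assume "S \<subseteq> S'"
    with \<open>finite S'\<close> card have "S = S'"
      by (intro card_subset_eq) simp_all
    with assms(4) show False ..
  qed
  with \<open>finite S\<close> have "card (S \<inter> S') < card S"
    by (intro psubset_card_mono) auto
  moreover have "card (cvert ` (S \<inter> S') :: 'd point set) \<le> card (S \<inter> S')"
    using \<open>finite S\<close> by (simp add: card_image_le)
  ultimately have "card (cvert ` (S \<inter> S') :: 'd point set) \<le> DIM('d point)"
    using card by simp
  then show ?thesis
    unfolding inter using \<open>finite S\<close> by (intro negligible_convex_hull_card_le) simp_all
qed

lemma sum_normalized_volume_triangulation:
  assumes "triangulation n T TYPE('d::{finite,wellorder})"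
  shows "(\<Sum>S\<in>T. normalized_volume S TYPE('d))
    = fact CARD('d) * measure lebesgue (convex hull (cvert ` {1..n} :: 'd point set))"
proof -
  let ?hull = "\<lambda>S. convex hull (cvert ` S) :: 'd point set"
  have "finite T" and sub: "\<And>S. S \<in> T \<Longrightarrow> S \<subseteq> {1..n}"
    and cover: "(\<Union>S\<in>T. ?hull S) = ?hull {1..n}"
    using assms unfolding triangulation_def is_dsimplex_def by auto
  have meas: "?hull S \<in> lmeasurable" if "S \<in> T" for S
    using sub[OF that] finite_subset
    by (intro lmeasurable_compact compact_convex_hull finite_imp_compact finite_imageI) blast
  have "measure lebesgue (\<Union>S\<in>T. ?hull S) = (\<Sum>S\<in>T. measure lebesgue (?hull S))"
    by (rule measure_negligible_finite_Union_image[OF \<open>finite T\<close> meas])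
      (simp_all add: pairwise_def negligible_inter_triangulation_simplices[OF assms])
  then show ?thesis
    by (simp add: normalized_volume_def cover sum_distrib_left)
qed

section \<open>GKZ vectors across a flip\<close>

lemma sum_outside_restrict_to:
  assumes "finite T"
  shows "sum f T = sum f (outside T C) + sum f (restrict_to T C)"
proof -
  have "finite (outside T C)" "finite (restrict_to T C)"
    using assms by (simp_all add: outside_def restrict_to_def)
  moreover have "outside T C \<inter> restrict_to T C = {}"
    by (auto simp: outside_def restrict_to_def)
  ultimately have "sum f (outside T C \<union> restrict_to T C) = sum f (outside T C) + sum f (restrict_to T C)"
    by (rule sum.union_disjoint)
  moreover have "outside T C \<union> restrict_to T C = T"
    by (auto simp: outside_def restrict_to_def)
  ultimately show ?thesis
    by simp
qed

lemma sum_normalized_volume_restrict_to_eq: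
  assumes "triangulation n T TYPE('d::{finite,wellorder})" "triangulation n T' TYPE('d)"
    and "outside T C = outside T' C"
  shows "(\<Sum>S\<in>restrict_to T C. normalized_volume S TYPE('d))
    = (\<Sum>S\<in>restrict_to T' C. normalized_volume S TYPE('d))"
proof -
  have "finite T" "finite T'"
    using assms(1,2) by (simp_all add: triangulation_def)
  then show ?thesis
    using sum_normalized_volume_triangulation[OF assms(1)]
      sum_normalized_volume_triangulation[OF assms(2)] assms(3)
      sum_outside_restrict_to[of T "\<lambda>S. normalized_volume S TYPE('d)" C]
      sum_outside_restrict_to[of T' "\<lambda>S. normalized_volume S TYPE('d)" C]
    by simp
qed

lemma gkz_entry_outside_eq:
  assumes "outside T C = outside T' C" "i \<notin> C"
  shows "gkz_entry T i D = gkz_entry T' i D"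
proof -
  have sel: "{S\<in>X. i \<in> S} = {S\<in>outside X C. i \<in> S}" for X
    using assms(2) by (auto simp: outside_def)
  show ?thesis
    by (simp only: gkz_entry_def sel[of T] sel[of T'] assms(1))
qed

lemma gkz_entry_circuit_vertex:
  assumes "triangulation n T TYPE('d::{finite,wellorder})" "card C = CARD('d) + 2" "t \<in> C"
  shows "gkz_entry T t TYPE('d) = (\<Sum>S\<in>{S\<in>outside T C. t \<in> S}. normalized_volume S TYPE('d))
    + (\<Sum>S\<in>restrict_to T C. normalized_volume S TYPE('d))
    - (if C - {t} \<in> T then normalized_volume (C - {t}) TYPE('d) else 0)"
proof -
  have "finite T" and card_T: "\<And>S. S \<in> T \<Longrightarrow> card S = CARD('d) + 1"
    using assms(1) by (auto simp: triangulation_def is_dsimplex_def)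
  have "finite C"
    using assms(2) by (simp add: card_ge_0_finite)
  have "S = C - {t}" if "S \<in> restrict_to T C" "t \<notin> S" for S
  proof (rule card_subset_eq)
    show "S \<subseteq> C - {t}" "card S = card (C - {t})"
      using that card_T assms(2,3) by (auto simp: restrict_to_def)
  qed (use \<open>finite C\<close> in simp)
  then have "{S\<in>restrict_to T C. t \<in> S} = restrict_to T C - {C - {t}}"
    by auto
  moreover have "finite (restrict_to T C)"
    using \<open>finite T\<close> by (simp add: restrict_to_def)
  ultimately have restrict_part: "(\<Sum>S\<in>{S\<in>restrict_to T C. t \<in> S}. normalized_volume S TYPE('d))
      = (\<Sum>S\<in>restrict_to T C. normalized_volume S TYPE('d))
        - (if C - {t} \<in> T then normalized_volume (C - {t}) TYPE('d) else 0)"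
    by (simp add: sum_diff1 restrict_to_def)
  have "{S\<in>T. t \<in> S} = {S\<in>outside T C. t \<in> S} \<union> {S\<in>restrict_to T C. t \<in> S}"
    by (auto simp: outside_def restrict_to_def)
  then have "gkz_entry T t TYPE('d) = (\<Sum>S\<in>{S\<in>outside T C. t \<in> S}. normalized_volume S TYPE('d))
      + (\<Sum>S\<in>{S\<in>restrict_to T C. t \<in> S}. normalized_volume S TYPE('d))"
    unfolding gkz_entry_eq_sum_normalized_volume
    by (simp only:)
      (rule sum.union_disjoint; use \<open>finite T\<close> in \<open>auto simp: outside_def restrict_to_def\<close>)
  with restrict_part show ?thesis
    by linarith
qed

lemma lex_less_iff_lexordp: "lex_less xs ys \<longleftrightarrow> ord_class.lexordp xs ys"
  by (simp add: lex_less_def List.lexordp_def lexordp_conv_lexord)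

lemma lex_less_asym: "lex_less xs ys \<Longrightarrow> \<not> lex_less ys xs"
  unfolding lex_less_iff_lexordp using lexordp_antisym by blast

lemma lex_less_map_upt:
  fixes f g :: "nat \<Rightarrow> real"
  assumes "k \<in> {m..<n}" "\<And>i. i < k \<Longrightarrow> f i = g i" "f k < g k"
  shows "lex_less (map f [m..<n]) (map g [m..<n])"
proof -
  have "[m..<n] = [m..<k] @ [k..<n]"
    using upt_add_eq_append[of m k "n - k"] assms(1) by simp
  also have "[k..<n] = k # [Suc k..<n]"
    using assms(1) by (simp add: upt_conv_Cons)
  finally have split: "[m..<n] = [m..<k] @ k # [Suc k..<n]" .
  have prefix: "map f [m..<k] = map g [m..<k]"
    using assms(2) by simp
  show ?thesis
    unfolding lex_less_iff_lexordp split map_append list.map prefix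
    by (rule lexordp_append_left_rightI[OF assms(3)])
qed

lemma lex_less_gkz_if_facet:
  assumes X: "triangulation n X TYPE('d::{finite,wellorder})" and Y: "triangulation n Y TYPE('d)"
    and out: "outside X C = outside Y C"
    and C: "C \<subseteq> {1..n}" "card C = CARD('d) + 2"
    and "C - {Min C} \<in> X" "C - {Min C} \<notin> Y"
  shows "lex_less (gkz n X TYPE('d)) (gkz n Y TYPE('d))"
proof -
  let ?t = "Min C"
  have "finite C"
    using C(1) finite_subset by blast
  then have "?t \<in> C"
    using C(2) by (intro Min_in) auto
  have "gkz_entry X i TYPE('d) = gkz_entry Y i TYPE('d)" if "i < ?t" for i
    using gkz_entry_outside_eq[OF out] Min_le[OF \<open>finite C\<close>, of i] that by auto
  moreover have "gkz_entry X ?t TYPE('d) < gkz_entry Y ?t TYPE('d)"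
  proof -
    have "0 < normalized_volume (C - {?t}) TYPE('d)"
      using \<open>finite C\<close> \<open>?t \<in> C\<close> C(2) by (intro normalized_volume_pos) auto
    then show ?thesis
      using gkz_entry_circuit_vertex[OF X C(2) \<open>?t \<in> C\<close>]
        gkz_entry_circuit_vertex[OF Y C(2) \<open>?t \<in> C\<close>]
        sum_normalized_volume_restrict_to_eq[OF X Y out] assms(6,7) out
      by simp
  qed
  moreover have "?t \<in> {1..<n + 1}"
    using C(1) \<open>?t \<in> C\<close> by auto
  ultimately show ?thesis
    unfolding gkz_def by (intro lex_less_map_upt)
qed

lemma up_flip_lex_less_gkz:
  assumes T: "triangulation n T TYPE('d::{finite,wellorder})" and T': "triangulation n T' TYPE('d)"
    and "up_flip n T T' TYPE('d)"
  shows "if even CARD('d) then lex_less (gkz n T' TYPE('d)) (gkz n T TYPE('d))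
    else lex_less (gkz n T TYPE('d)) (gkz n T' TYPE('d))"
proof -
  obtain C where circ: "circuit n C TYPE('d)" and out: "outside T C = outside T' C"
    and low: "restrict_to T C = lower_triang C TYPE('d)"
    and up: "restrict_to T' C = upper_triang C TYPE('d)"
    using assms(3) unfolding up_flip_def by blast
  have C: "C \<subseteq> {1..n}" "finite C" "card C = CARD('d) + 2"
    using circ card_circuit[OF circ] unfolding circuit_def by auto
  have "C - {Min C} \<in> T \<longleftrightarrow> C - {Min C} \<in> lower_triang C TYPE('d)"
    and "C - {Min C} \<in> T' \<longleftrightarrow> C - {Min C} \<in> upper_triang C TYPE('d)"
    unfolding low[symmetric] up[symmetric] restrict_to_def by auto
  then have "C - {Min C} \<in> T \<longleftrightarrow> odd CARD('d)"
    and "C - {Min C} \<in> T' \<longleftrightarrow> even CARD('d)"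
    using circuit_facet_without_Min[OF C(2,3)] by simp_all
  then show ?thesis
    using lex_less_gkz_if_facet[OF T T' out C(1,3)] lex_less_gkz_if_facet[OF T' T out[symmetric] C(1,3)]
    by (cases "even CARD('d)") simp_all
qed

theorem proposition1:
  fixes n :: nat and T T' :: "nat set set"
  assumes "n > CARD('d::{finite,wellorder})"
    and "triangulation n T TYPE('d)"
    and "triangulation n T' TYPE('d)"
    and "differ_by_flip n T T' TYPE('d)"
  shows "up_flip n T T' TYPE('d) \<longleftrightarrow>
    (if even CARD('d) then lex_less (gkz n T' TYPE('d)) (gkz n T TYPE('d))
     else lex_less (gkz n T TYPE('d)) (gkz n T' TYPE('d)))"
proof
  assume "up_flip n T T' TYPE('d)"
  then show "if even CARD('d) then lex_less (gkz n T' TYPE('d)) (gkz n T TYPE('d))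
     else lex_less (gkz n T TYPE('d)) (gkz n T' TYPE('d))"
    using up_flip_lex_less_gkz assms(2,3) by blast
next
  assume lex: "if even CARD('d) then lex_less (gkz n T' TYPE('d)) (gkz n T TYPE('d))
     else lex_less (gkz n T TYPE('d)) (gkz n T' TYPE('d))"
  show "up_flip n T T' TYPE('d)"
  proof (rule ccontr)
    assume "\<not> up_flip n T T' TYPE('d)"
    with assms(4) have "up_flip n T' T TYPE('d)"
      by (simp add: differ_by_flip_def)
    from up_flip_lex_less_gkz[OF assms(3,2) this] lex show False
      by (auto split: if_splits dest: lex_less_asym)
  qed
qed

end
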